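(* Let $\Phi\triangleright\Gamma\vdash^{(b,e,m,f)}t:\sigma$ be a tight derivation in system $\mathscr{E}$. Then there exist $u\in\mathcal{M}$ and a head-reduction sequence $\rho: t\to_h^{(b,e,m)}u$ (containing exactly $b$ steps of kind (b), $e$ steps of kind (e) and $m$ steps of kind (m)) such that $|u|=f$.
   Context: Pair pattern calculus: patterns $p,q ::= x\mid\langle p,q\rangle$ (linear); $\mathrm{var}(p)$ = variables of $p$; $p\# q$ means disjoint variables. Terms $t,u ::= x\mid\lambda p.t\mid\langle t,u\rangle\mid t\,u\mid t[p/u]$, $\mathrm{var}(p)$ bound in $t$ in $\lambda p.t$ and $t[p/u]$; $\mathrm{fv}$ as usual; terms modulo $\alpha$. List contexts $L::=\Box\mid L[p/u]$, $L\langle t\rangle$ plugging (possibly capturing), $\mathrm{bv}(L)$ variables bound by $L$; $t\{x/u\}$ capture-avoiding substitution; $\mathrm{abs}(t)$ iff $t=L\langle\lambda p.u\rangle$. Head reduction ($t\not\to_h$: no $u$ with $t\to_h u$): (b) $L\langle\lambda p.t\rangle u\to_h L\langle t[p/u]\rangle$ if $\mathrm{bv}(L)\cap\mathrm{fv}(u)=\emptyset$; (m) $t[\langle p_1,p_2\rangle/L\langle\langle u_1,u_2\rangle\rangle]\to_h L\langle t[p_1/u_1][p_2/u_2]\rangle$ if $t\not\to_h$ and $\mathrm{bv}(L)\cap\mathrm{fv}(t)=\emptyset$; (e) $t[x/u]\to_h t\{x/u\}$ if $t\not\to_h$; closure: $\lambda p.t\to_h\lambda p.t'$ if $t\to_h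 t'$; $tu\to_h t'u$ if $t\to_h t'$ and not $\mathrm{abs}(t)$; $t[p/u]\to_h t'[p/u]$ if $t\to_h t'$; $t[p/u]\to_h t[p/u']$ if $t\not\to_h$, $p$ not a variable, $u\to_h u'$. The kind of a step is the base rule (b), (e) or (m) it uses. Canonical forms $\mathcal{M} ::= \lambda p.\mathcal{M}\mid\langle t,t\rangle\mid\mathcal{M}[\langle p_1,p_2\rangle/\mathcal{N}]\mid\mathcal{N}$, $\mathcal{N} ::= x\mid\mathcal{N}\,t\mid\mathcal{N}[\langle p_1,p_2\rangle/\mathcal{N}]$, with size $|x|=0$, $|\langle t,u\rangle|=1$, $|\mathcal{N}t|=|\mathcal{N}|+1$, $|\lambda p.\mathcal{M}|=|\mathcal{M}|+1$, $|\mathcal{M}[\langle p_1,p_2\rangle/\mathcal{N}]|=|\mathcal{M}|+|\mathcal{N}|+1$. System $\mathscr{E}$. Types: tight types $\mathtt{t} ::= \bullet_{\mathcal{N}}\mid\bullet_{\mathcal{M}}$; types $\sigma ::= \mathtt{t}\mid \mathcal{A}_1\times\mathcal{A}_2\mid \mathcal{A}\to\sigma$; multi-types $\mathcal{A} ::= [\sigma_k]_{k\in K}$ (finite, possibly empty). Contexts map variables to multi-types, $\mathrm{dom}(\Gamma)$ = variables with non-empty multi-type; $\wedge$ pointwise multiset union; $\Gamma|_p$ restriction to $\mathrm{var}(p)$; $\Gamma\setminus\mathrm{var}(p)$ removal. $\mathrm{tight}(\sigma)$ iff $\sigma\in\{\bullet_{\mathcal{N}},\bullet_{\mathcal{M}}\}$,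 extended elementwise. Rules: (pat_v) $x:\mathcal{A}\Vdash^{(1,0,0)} x:\mathcal{A}$. (pat_×) from $\Gamma\Vdash^{(e_p,m_p,f_p)}p:\mathcal{A}$, $\Delta\Vdash^{(e_q,m_q,f_q)}q:\mathcal{B}$, $p\#q$ infer $\Gamma\wedge\Delta\Vdash^{(e_p+e_q,1+m_p+m_q,f_p+f_q)}\langle p,q\rangle:[\mathcal{A}\times\mathcal{B}]$. (pat_p) if $\mathrm{dom}(\Gamma)\subseteq\mathrm{var}(\langle p,q\rangle)$ and $\mathrm{tight}(\Gamma)$ then $\Gamma\Vdash^{(0,0,1)}\langle p,q\rangle:[\bullet_{\mathcal{N}}]$. (ax) $x:[\sigma]\vdash^{(0,0,0,0)}x:\sigma$. (abs) from $\Gamma\vdash^{(b,e,m,f)}t:\sigma$ and $\Gamma|_p\Vdash^{(e_p,m_p,f_p)}p:\mathcal{A}$ infer $\Gamma\setminus\mathrm{var}(p)\vdash^{(b+1,e+e_p,m+m_p,f+f_p)}\lambda p.t:\mathcal{A}\to\sigma$. (abs_p) from $\Gamma\vdash^{(b,e,m,f)}t:\mathtt{t}$ ($\mathtt{t}$ tight) and $\mathrm{tight}(\Gamma|_p)$ infer $\Gamma\setminus\mathrm{var}(p)\vdash^{(b,e,m,f+1)}\lambda p.t:\bullet_{\mathcal{M}}$. (many) from $(\Gamma_k\vdash^{(b_k,e_k,m_k,f_k)}t:\sigma_k)_{k\in K}$ infer $\wedge_k\Gamma_k\vdash^{(\sum b_k,\sum e_k,\sum m_k,\sum f_k)}t:[\sigma_k]_{k\in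 K}$. (app) from $\Gamma\vdash^{(b_t,e_t,m_t,f_t)}t:\mathcal{A}\to\sigma$, $\Delta\vdash^{(b_u,e_u,m_u,f_u)}u:\mathcal{A}$ infer $\Gamma\wedge\Delta\vdash^{(b_t+b_u,e_t+e_u,m_t+m_u,f_t+f_u)}t\,u:\sigma$. (app_p) from $\Gamma\vdash^{(b,e,m,f)}t:\bullet_{\mathcal{N}}$ infer $\Gamma\vdash^{(b,e,m,f+1)}t\,u:\bullet_{\mathcal{N}}$. (pair) from $\Gamma\vdash^{(b_t,e_t,m_t,f_t)}t:\mathcal{A}$, $\Delta\vdash^{(b_u,e_u,m_u,f_u)}u:\mathcal{B}$ infer $\Gamma\wedge\Delta\vdash^{(b_t+b_u,e_t+e_u,m_t+m_u,f_t+f_u)}\langle t,u\rangle:\mathcal{A}\times\mathcal{B}$. (pair_p) $\vdash^{(0,0,0,1)}\langle t,u\rangle:\bullet_{\mathcal{M}}$. (match) from $\Gamma\vdash^{(b_t,e_t,m_t,f_t)}t:\sigma$, $\Gamma|_p\Vdash^{(e_p,m_p,f_p)}p:\mathcal{A}$, $\Delta\vdash^{(b_u,e_u,m_u,f_u)}u:\mathcal{A}$ infer $(\Gamma\setminus\mathrm{var}(p))\wedge\Delta\vdash^{(b_t+b_u,e_t+e_u+e_p,m_t+m_u+m_p,f_t+f_u+f_p)}t[p/u]:\sigma$. A derivation is tight if its context and its type are tight. *)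

theory Defs
  imports "HOL-Library.Multiset"
begin

section \<open>Syntax (locally nameless / de Bruijn presentation of terms modulo alpha)\<close>

text \<open>Patterns are linear, so a pattern is determined (up to alpha) by its shape.
  A pattern with n leaves binds n consecutive de Bruijn indices; for a pair pattern
  (PP p1 p2) the leaves of p1 get the innermost indices 0..nv p1 - 1 and the leaves
  of p2 the next ones.\<close>

datatype pat = PV | PP pat pat

primrec nv :: "pat \<Rightarrow> nat" where
  "nv PV = 1"
| "nv (PP p q) = nv p + nv q"

datatype trm = Var nat | Lam pat trm | Pair trm trm | App trm trm | Sub trm pat trm

text \<open>Sub t p u is the explicit matching t[p/u]; var(p) is bound in t only.\<close>

primrec lift :: "nat \<Rightarrow> nat \<Rightarrow> trm \<Rightarrow> trm" where
  "lift k c (Var i) = (if i < c then Var i else Var (i + k))"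
| "lift k c (Lam p t) = Lam p (lift k (c + nv p) t)"
| "lift k c (Pair t u) = Pair (lift k c t) (lift k c u)"
| "lift k c (App t u) = App (lift k c t) (lift k c u)"
| "lift k c (Sub t p u) = Sub (lift k (c + nv p) t) p (lift k c u)"

primrec subst :: "trm \<Rightarrow> nat \<Rightarrow> trm \<Rightarrow> trm" where
  "subst (Var i) j u = (if i < j then Var i else if i = j then lift j 0 u else Var (i - 1))"
| "subst (Lam p t) j u = Lam p (subst t (j + nv p) u)"
| "subst (Pair t s) j u = Pair (subst t j u) (subst s j u)"
| "subst (App t s) j u = App (subst t j u) (subst s j u)"
| "subst (Sub t p s) j u = Sub (subst t (j + nv p) u) p (subst s j u)"

text \<open>List contexts L ::= Box | L[p/u], as the list of its explicit matchings from
  innermost to outermost; plugging may capture.\<close>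
type_synonym lctx = "(pat \<times> trm) list"

definition plug :: "lctx \<Rightarrow> trm \<Rightarrow> trm" where
  "plug L t = foldl (\<lambda>s (p, u). Sub s p u) t L"

definition bvn :: "lctx \<Rightarrow> nat" where
  "bvn L = sum_list (map (nv \<circ> fst) L)"

definition is_abs :: "trm \<Rightarrow> bool" where
  "is_abs t \<longleftrightarrow> (\<exists>L p s. t = plug L (Lam p s))"

datatype kind = KB | KE | KM

text \<open>It is defined by
  structural recursion, which stratifies the negative premises (t not reducible).
  The side conditions bv(L) \<inter> fv(..) = {} of the named presentation correspond
  to the index shifts below.\<close>
primrec hsteps :: "trm \<Rightarrow> (kind \<times> trm) set" where
  "hsteps (Var x) = {}"
| "hsteps (Pair t u) = {}"
| "hsteps (Lam p t) = (\<lambda>(k, t'). (k, Lam p t')) ` hsteps t"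
| "hsteps (App t u) =
     {(KB, plug L (Sub s p (lift (bvn L) 0 u))) | L p s. t = plug L (Lam p s)}
     \<union> (if is_abs t then {} else (\<lambda>(k, t'). (k, App t' u)) ` hsteps t)"
| "hsteps (Sub t p u) =
     (\<lambda>(k, t'). (k, Sub t' p u)) ` hsteps t
     \<union> (if hsteps t = {} then
          (case p of
             PV \<Rightarrow> {(KE, subst t 0 u)}
           | PP p1 p2 \<Rightarrow>
               {(KM, plug L (Sub (Sub (lift (bvn L) (nv p1 + nv p2) t) p1 (lift (nv p2) 0 u1)) p2 u2))
                 | L u1 u2. u = plug L (Pair u1 u2)}
               \<union> (\<lambda>(k, u'). (k, Sub t p u')) ` hsteps u)
        else {})"

definition hred :: "trm \<Rightarrow> kind \<Rightarrow> trm \<Rightarrow> bool" where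
  "hred t k t' \<longleftrightarrow> (k, t') \<in> hsteps t"

inductive hreds :: "trm \<Rightarrow> nat \<Rightarrow> nat \<Rightarrow> nat \<Rightarrow> trm \<Rightarrow> bool" where
  hr_refl: "hreds t 0 0 0 t"
| hr_b: "hred t KB t' \<Longrightarrow> hreds t' b e m u \<Longrightarrow> hreds t (Suc b) e m u"
| hr_e: "hred t KE t' \<Longrightarrow> hreds t' b e m u \<Longrightarrow> hreds t b (Suc e) m u"
| hr_m: "hred t KM t' \<Longrightarrow> hreds t' b e m u \<Longrightarrow> hreds t b e (Suc m) u"

inductive canM :: "trm \<Rightarrow> bool" and canN :: "trm \<Rightarrow> bool" where
  cM_lam: "canM t \<Longrightarrow> canM (Lam p t)"
| cM_pair: "canM (Pair t u)"
| cM_sub: "canM t \<Longrightarrow> canN u \<Longrightarrow> canM (Sub t (PP p1 p2) u)"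
| cM_N: "canN t \<Longrightarrow> canM t"
| cN_var: "canN (Var x)"
| cN_app: "canN t \<Longrightarrow> canN (App t u)"
| cN_sub: "canN t \<Longrightarrow> canN u \<Longrightarrow> canN (Sub t (PP p1 p2) u)"

primrec csize :: "trm \<Rightarrow> nat" where
  "csize (Var x) = 0"
| "csize (Pair t u) = 1"
| "csize (App t u) = csize t + 1"
| "csize (Lam p t) = csize t + 1"
| "csize (Sub t p u) = csize t + csize u + 1"

datatype ty = TN | TM | Prod "ty multiset" "ty multiset" | Arr "ty multiset" ty

text \<open>TN = bullet_N, TM = bullet_M.\<close>

definition tight :: "ty \<Rightarrow> bool" where
  "tight s \<longleftrightarrow> s = TN \<or> s = TM"

definition tight_m :: "ty multiset \<Rightarrow> bool" where
  "tight_m A \<longleftrightarrow> (\<forall>s\<in>#A. tight s)"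

type_synonym ctx = "nat \<Rightarrow> ty multiset"

definition tight_ctx :: "ctx \<Rightarrow> bool" where
  "tight_ctx G \<longleftrightarrow> (\<forall>x. tight_m (G x))"

definition cempty :: ctx where "cempty = (\<lambda>_. {#})"

definition cplus :: "ctx \<Rightarrow> ctx \<Rightarrow> ctx" where
  "cplus G D = (\<lambda>x. G x + D x)"

definition csing :: "nat \<Rightarrow> ty multiset \<Rightarrow> ctx" where
  "csing x A = (\<lambda>y. if y = x then A else {#})"

text \<open>Gamma restricted to var(p), for a pattern binding the indices 0..k-1.\<close>
definition crestr :: "ctx \<Rightarrow> nat \<Rightarrow> ty multiset list" where
  "crestr G k = map G [0..<k]"

text \<open>Gamma minus var(p): the remaining indices, shifted down.\<close>
definition cdrop :: "ctx \<Rightarrow> nat \<Rightarrow> ctx" where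
  "cdrop G k = (\<lambda>x. G (x + k))"

text \<open>Pattern typing: the context is the list of multi-types of the pattern's
  variables (in index order), so union of the disjoint contexts is concatenation.\<close>
inductive ptyp :: "ty multiset list \<Rightarrow> pat \<Rightarrow> ty multiset \<Rightarrow> nat \<Rightarrow> nat \<Rightarrow> nat \<Rightarrow> bool" where
  pat_v: "ptyp [A] PV A 1 0 0"
| pat_x: "ptyp G p A ep mp fp \<Longrightarrow> ptyp D q B eq mq fq \<Longrightarrow>
          ptyp (G @ D) (PP p q) {#Prod A B#} (ep + eq) (1 + mp + mq) (fp + fq)"
| pat_p: "length G = nv (PP p q) \<Longrightarrow> (\<forall>A\<in>set G. tight_m A) \<Longrightarrow>
          ptyp G (PP p q) {#TN#} 0 0 1"

inductive ety :: "ctx \<Rightarrow> trm \<Rightarrow> ty \<Rightarrow> nat \<Rightarrow> nat \<Rightarrow> nat \<Rightarrow> nat \<Rightarrow> bool"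
  and emty :: "ctx \<Rightarrow> trm \<Rightarrow> ty multiset \<Rightarrow> nat \<Rightarrow> nat \<Rightarrow> nat \<Rightarrow> nat \<Rightarrow> bool" where
  ax: "ety (csing x {#s#}) (Var x) s 0 0 0 0"
| abs: "ety G t s b e m f \<Longrightarrow> ptyp (crestr G (nv p)) p A ep mp fp \<Longrightarrow>
        ety (cdrop G (nv p)) (Lam p t) (Arr A s) (b + 1) (e + ep) (m + mp) (f + fp)"
| abs_p: "ety G t s b e m f \<Longrightarrow> tight s \<Longrightarrow> (\<forall>A\<in>set (crestr G (nv p)). tight_m A) \<Longrightarrow>
        ety (cdrop G (nv p)) (Lam p t) TM b e m (f + 1)"
| many_nil: "emty cempty t {#} 0 0 0 0"
| many_cons: "emty G t A b e m f \<Longrightarrow> ety D t s b' e' m' f' \<Longrightarrow>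
        emty (cplus G D) t (A + {#s#}) (b + b') (e + e') (m + m') (f + f')"
| app: "ety G t (Arr A s) bt et mt ft \<Longrightarrow> emty D u A bu eu mu fu \<Longrightarrow>
        ety (cplus G D) (App t u) s (bt + bu) (et + eu) (mt + mu) (ft + fu)"
| app_p: "ety G t TN b e m f \<Longrightarrow> ety G (App t u) TN b e m (f + 1)"
| pair: "emty G t A bt et mt ft \<Longrightarrow> emty D u B bu eu mu fu \<Longrightarrow>
        ety (cplus G D) (Pair t u) (Prod A B) (bt + bu) (et + eu) (mt + mu) (ft + fu)"
| pair_p: "ety cempty (Pair t u) TM 0 0 0 1"
| match: "ety G t s bt et mt ft \<Longrightarrow> ptyp (crestr G (nv p)) p A ep mp fp \<Longrightarrow>
        emty D u A bu eu mu fu \<Longrightarrow>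
        ety (cplus (cdrop G (nv p)) D) (Sub t p u) s (bt + bu) (et + eu + ep) (mt + mu + mp) (ft + fu + fp)"

end

theory Submission
  imports Defs
begin

(*
  Quantitative subject reduction: if t reduces to t' by a head step of kind k, every derivation
  of t yields one of t' with the same context, type and f, and with exactly one fewer k among the
  counters b, e, m. A (b) step is typed by reading the typing of the abstraction as that of an
  explicit matching, an (e) step by the substitution lemma, and an (m) step by splitting the typing
  of the pair pattern between the two new matchings. Conversely, in a tight context a neutral term
  can only receive tight types, which rules out the rules app and pat_x on head normal forms; hence
  a tight derivation of a head normal form shows it is canonical, with b = e = m = 0 and f equal
  to its size. Induction on b + e + m combines the two.
*)

section \<open>List contexts and head steps\<close>

lemma plug_Nil [simp]: "plug [] t = t"
  by (simp add: plug_def)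

lemma plug_snoc [simp]: "plug (L @ [(p, u)]) t = Sub (plug L t) p u"
  by (simp add: plug_def)

lemma bvn_Nil [simp]: "bvn [] = 0"
  by (simp add: bvn_def)

lemma bvn_snoc [simp]: "bvn (L @ [(p, u)]) = bvn L + nv p"
  by (simp add: bvn_def)

lemma plug_eq_Var_iff [simp]: "plug L t = Var x \<longleftrightarrow> L = [] \<and> t = Var x"
  and plug_eq_Lam_iff [simp]: "plug L t = Lam p s \<longleftrightarrow> L = [] \<and> t = Lam p s"
  and plug_eq_Pair_iff [simp]: "plug L t = Pair a c \<longleftrightarrow> L = [] \<and> t = Pair a c"
  and plug_eq_App_iff [simp]: "plug L t = App a c \<longleftrightarrow> L = [] \<and> t = App a c"
  by (induction L rule: rev_induct) (auto simp: plug_def)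

lemma plug_eq_Sub_iff:
  "plug L t = Sub a p c \<longleftrightarrow> (L = [] \<and> t = Sub a p c) \<or> (\<exists>L'. L = L' @ [(p, c)] \<and> a = plug L' t)"
  by (cases L rule: rev_exhaust) auto

definition is_pair :: "trm \<Rightarrow> bool" where
  "is_pair t \<longleftrightarrow> (\<exists>L a c. t = plug L (Pair a c))"

lemma is_abs_simps [simp]:
  "\<not> is_abs (Var x)" "is_abs (Lam p t)" "\<not> is_abs (Pair a c)" "\<not> is_abs (App a c)"
  "is_abs (Sub t p u) \<longleftrightarrow> is_abs t"
  unfolding is_abs_def by (auto simp: eq_commute[of _ "plug _ _"] plug_eq_Sub_iff intro: exI[of _ "[]"])

lemma is_pair_simps [simp]:
  "\<not> is_pair (Var x)" "\<not> is_pair (Lam p t)" "is_pair (Pair a c)" "\<not> is_pair (App a c)"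
  "is_pair (Sub t p u) \<longleftrightarrow> is_pair t"
  unfolding is_pair_def by (auto simp: eq_commute[of _ "plug _ _"] plug_eq_Sub_iff intro: exI[of _ "[]"])

lemma hsteps_App_eq_empty: "hsteps (App t u) = {} \<longleftrightarrow> \<not> is_abs t \<and> hsteps t = {}"
  by (auto simp: is_abs_def)

lemma hsteps_Sub_eq_empty:
  "hsteps (Sub t p u) = {} \<longleftrightarrow>
     hsteps t = {} \<and> (\<exists>p1 p2. p = PP p1 p2) \<and> \<not> is_pair u \<and> hsteps u = {}"
  by (cases p) (auto simp: is_pair_def)

lemma hsteps_AppE:
  assumes "(k, t') \<in> hsteps (App t u)"
  obtains (beta) L p s where "k = KB" "t = plug L (Lam p s)" "t' = plug L (Sub s p (lift (bvn L) 0 u))"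
  | (left) t'' where "(k, t'') \<in> hsteps t" "t' = App t'' u"
  using assms by (auto split: if_splits)

lemma hsteps_SubE:
  assumes "(k, t') \<in> hsteps (Sub t p u)"
  obtains (left) t'' where "(k, t'') \<in> hsteps t" "t' = Sub t'' p u"
  | (subst) "p = PV" "k = KE" "t' = subst t 0 u"
  | (pair) p1 p2 L u1 u2 where "p = PP p1 p2" "k = KM" "u = plug L (Pair u1 u2)"
      "t' = plug L (Sub (Sub (lift (bvn L) (nv p1 + nv p2) t) p1 (lift (nv p2) 0 u1)) p2 u2)"
  | (right) p1 p2 u' where "p = PP p1 p2" "(k, u') \<in> hsteps u" "t' = Sub t p u'"
  using assms by (cases p) (auto split: if_splits)

section \<open>Typing contexts\<close>

definition cins :: "nat \<Rightarrow> nat \<Rightarrow> ctx \<Rightarrow> ctx" where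
  "cins k c G = (\<lambda>x. if x < c then G x else if x < c + k then {#} else G (x - k))"

definition csub :: "nat \<Rightarrow> ctx \<Rightarrow> ctx \<Rightarrow> ctx" where
  "csub j G D = (\<lambda>x. if x < j then G x else G (Suc x) + D (x - j))"

lemma cplus_cempty [simp]: "cplus cempty D = D" "cplus D cempty = D"
  by (auto simp: cplus_def cempty_def)

lemma cplus_assoc: "cplus (cplus G D) H = cplus G (cplus D H)"
  by (simp add: cplus_def add.assoc)

lemma tight_m_plus [simp]: "tight_m (A + B) \<longleftrightarrow> tight_m A \<and> tight_m B"
  by (auto simp: tight_m_def)

lemma tight_ctx_cplus [simp]: "tight_ctx (cplus G D) \<longleftrightarrow> tight_ctx G \<and> tight_ctx D"
  by (auto simp: tight_ctx_def cplus_def)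

lemma tight_ctx_if_cdrop_crestr:
  assumes "tight_ctx (cdrop G n)" and "\<forall>A\<in>set (crestr G n). tight_m A"
  shows "tight_ctx G"
  unfolding tight_ctx_def
proof
  fix x
  show "tight_m (G x)"
  proof (cases "x < n")
    case True
    then show ?thesis using assms(2) by (auto simp: crestr_def)
  next
    case False
    then have "G x = cdrop G n (x - n)" by (simp add: cdrop_def)
    then show ?thesis using assms(1) by (simp add: tight_ctx_def)
  qed
qed

lemma crestr_cins: "n \<le> c \<Longrightarrow> crestr (cins k c G) n = crestr G n"
  by (auto simp: crestr_def cins_def)

lemma cdrop_cins: "cdrop (cins k (c + n) G) n = cins k c (cdrop G n)"
  by (auto simp: cdrop_def cins_def fun_eq_iff)

lemma cins_cplus: "cins k c (cplus G D) = cplus (cins k c G) (cins k c D)"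
  by (auto simp: cplus_def cins_def fun_eq_iff)

lemma cins_cempty [simp]: "cins k c cempty = cempty"
  by (auto simp: cempty_def cins_def fun_eq_iff)

lemma cins_csing: "cins k c (csing x A) = csing (if x < c then x else x + k) A"
  by (auto simp: csing_def cins_def fun_eq_iff)

lemma crestr_csub: "n \<le> j \<Longrightarrow> crestr (csub j G D) n = crestr G n"
  by (auto simp: crestr_def csub_def)

lemma cdrop_csub: "cdrop (csub (j + n) G D) n = csub j (cdrop G n) D"
  by (auto simp: cdrop_def csub_def fun_eq_iff)

lemma csub_cplus: "csub j (cplus G1 G2) (cplus D1 D2) = cplus (csub j G1 D1) (csub j G2 D2)"
  by (auto simp: csub_def cplus_def fun_eq_iff add_ac)

lemma csub_cempty [simp]: "csub j cempty cempty = cempty"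
  by (auto simp: csub_def cempty_def fun_eq_iff)

lemma csub_csing_same: "csub j (csing j A) D = cins j 0 D"
  by (auto simp: csub_def csing_def cins_def fun_eq_iff)

lemma csub_csing_other:
  "x \<noteq> j \<Longrightarrow> csub j (csing x A) cempty = csing (if x < j then x else x - 1) A"
  by (auto simp: csub_def csing_def cempty_def fun_eq_iff)

lemma ptyp_length: "ptyp P p A e m f \<Longrightarrow> length P = nv p"
  by (induction rule: ptyp.induct) auto

section \<open>Typing rules and their inversion\<close>

lemma ax': "G = csing x {#s#} \<Longrightarrow> ety G (Var x) s 0 0 0 0"
  using ax by blast

lemma abs': "ety G t s b e m f \<Longrightarrow> ptyp (crestr G (nv p)) p A ep mp fp \<Longrightarrow>
  G' = cdrop G (nv p) \<Longrightarrow> b' = b + 1 \<Longrightarrow> e' = e + ep \<Longrightarrow> m' = m + mp \<Longrightarrow> f' = f + fp \<Longrightarrow>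
  s' = Arr A s \<Longrightarrow> ety G' (Lam p t) s' b' e' m' f'"
  using abs by blast

lemma abs_p': "ety G t s b e m f \<Longrightarrow> tight s \<Longrightarrow> \<forall>A\<in>set (crestr G (nv p)). tight_m A \<Longrightarrow>
  G' = cdrop G (nv p) \<Longrightarrow> f' = f + 1 \<Longrightarrow> ety G' (Lam p t) TM b e m f'"
  using abs_p by blast

lemma many_cons': "emty G t A b e m f \<Longrightarrow> ety D t s b' e' m' f' \<Longrightarrow> G' = cplus G D \<Longrightarrow>
  A' = A + {#s#} \<Longrightarrow> b'' = b + b' \<Longrightarrow> e'' = e + e' \<Longrightarrow> m'' = m + m' \<Longrightarrow> f'' = f + f' \<Longrightarrow>
  emty G' t A' b'' e'' m'' f''"
  using many_cons by blast

lemma app': "ety G t (Arr A s) bt et mt ft \<Longrightarrow> emty D u A bu eu mu fu \<Longrightarrow> G' = cplus G D \<Longrightarrow>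
  b' = bt + bu \<Longrightarrow> e' = et + eu \<Longrightarrow> m' = mt + mu \<Longrightarrow> f' = ft + fu \<Longrightarrow>
  ety G' (App t u) s b' e' m' f'"
  using app by blast

lemma app_p': "ety G t TN b e m f \<Longrightarrow> f' = f + 1 \<Longrightarrow> s' = TN \<Longrightarrow> ety G (App t u) s' b e m f'"
  using app_p by blast

lemma pair': "emty G t A bt et mt ft \<Longrightarrow> emty D u B bu eu mu fu \<Longrightarrow> G' = cplus G D \<Longrightarrow>
  b' = bt + bu \<Longrightarrow> e' = et + eu \<Longrightarrow> m' = mt + mu \<Longrightarrow> f' = ft + fu \<Longrightarrow>
  ety G' (Pair t u) (Prod A B) b' e' m' f'"
  using pair by blast

lemma pair_p': "ety cempty (Pair t u) TM 0 0 0 (Suc 0)"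
  using pair_p by simp

lemma match': "ety G t s bt et mt ft \<Longrightarrow> ptyp (crestr G (nv p)) p A ep mp fp \<Longrightarrow>
  emty D u A bu eu mu fu \<Longrightarrow> G' = cplus (cdrop G (nv p)) D \<Longrightarrow>
  b' = bt + bu \<Longrightarrow> e' = et + eu + ep \<Longrightarrow> m' = mt + mu + mp \<Longrightarrow> f' = ft + fu + fp \<Longrightarrow>
  ety G' (Sub t p u) s b' e' m' f'"
  using match by blast

lemma ety_VarE:
  assumes "ety G (Var x) s b e m f"
  shows "G = csing x {#s#} \<and> b = 0 \<and> e = 0 \<and> m = 0 \<and> f = 0"
  using assms by (cases rule: ety.cases) simp_all

lemma ety_LamE:
  assumes "ety G (Lam p t) \<sigma> b e m f"
  obtains (abs) G1 \<sigma>' b1 e1 m1 f1 A ep mp fp where "ety G1 t \<sigma>' b1 e1 m1 f1"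
    "ptyp (crestr G1 (nv p)) p A ep mp fp" "G = cdrop G1 (nv p)" "\<sigma> = Arr A \<sigma>'"
    "b = Suc b1" "e = e1 + ep" "m = m1 + mp" "f = f1 + fp"
  | (abs_p) G1 \<sigma>' f1 where "ety G1 t \<sigma>' b e m f1" "tight \<sigma>'"
    "\<forall>A\<in>set (crestr G1 (nv p)). tight_m A" "G = cdrop G1 (nv p)" "\<sigma> = TM" "f = Suc f1"
  using assms by (cases rule: ety.cases) auto

lemma ety_AppE:
  assumes "ety G (App t u) \<sigma> b e m f"
  obtains (app) G1 D A bt et mt ft bu eu mu fu where "ety G1 t (Arr A \<sigma>) bt et mt ft"
    "emty D u A bu eu mu fu" "G = cplus G1 D"
    "b = bt + bu" "e = et + eu" "m = mt + mu" "f = ft + fu"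
  | (app_p) f1 where "ety G t TN b e m f1" "\<sigma> = TN" "f = Suc f1"
  using assms by (cases rule: ety.cases) auto

lemma ety_PairE:
  assumes "ety G (Pair t u) \<sigma> b e m f"
  obtains (pair) G1 D A B bt et mt ft bu eu mu fu where "emty G1 t A bt et mt ft"
    "emty D u B bu eu mu fu" "G = cplus G1 D" "\<sigma> = Prod A B"
    "b = bt + bu" "e = et + eu" "m = mt + mu" "f = ft + fu"
  | (pair_p) "G = cempty" "\<sigma> = TM" "b = 0" "e = 0" "m = 0" "f = Suc 0"
  using assms by (cases rule: ety.cases) auto

lemma ety_SubE:
  assumes "ety G (Sub t p u) \<sigma> b e m f"
  obtains G1 D A bt et mt ft ep mp fp bu eu mu fu where "ety G1 t \<sigma> bt et mt ft"
    "ptyp (crestr G1 (nv p)) p A ep mp fp" "emty D u A bu eu mu fu"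
    "G = cplus (cdrop G1 (nv p)) D"
    "b = bt + bu" "e = et + eu + ep" "m = mt + mu + mp" "f = ft + fu + fp"
  using assms by (cases rule: ety.cases) auto

lemma ptyp_PVE:
  assumes "ptyp P PV A e m f"
  shows "P = [A] \<and> e = Suc 0 \<and> m = 0 \<and> f = 0"
  using assms by (cases rule: ptyp.cases) simp_all

lemma ptyp_PPE:
  assumes "ptyp P (PP p q) A e m f"
  obtains (pat_x) P1 P2 A1 A2 e1 m1 f1 e2 m2 f2 where "ptyp P1 p A1 e1 m1 f1" "ptyp P2 q A2 e2 m2 f2"
    "P = P1 @ P2" "A = {#Prod A1 A2#}" "e = e1 + e2" "m = Suc (m1 + m2)" "f = f1 + f2"
  | (pat_p) "length P = nv p + nv q" "\<forall>A\<in>set P. tight_m A" "A = {#TN#}" "e = 0" "m = 0" "f = Suc 0"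
  using assms by (cases rule: ptyp.cases) auto

lemma emty_emptyD: "emty G t {#} b e m f \<Longrightarrow> G = cempty \<and> b = 0 \<and> e = 0 \<and> m = 0 \<and> f = 0"
  by (erule emty.cases) auto

lemma emty_add_mset_splitD:
  "emty G t A' b e m f \<Longrightarrow> A' = A + {#s#} \<Longrightarrow>
   \<exists>G1 D b1 e1 m1 f1 b2 e2 m2 f2. emty G1 t A b1 e1 m1 f1 \<and> ety D t s b2 e2 m2 f2 \<and>
     G = cplus G1 D \<and> b = b1 + b2 \<and> e = e1 + e2 \<and> m = m1 + m2 \<and> f = f1 + f2"
proof (induction "size A'" arbitrary: G A' b e m f A rule: less_induct)
  case less
  from less.prems(1) show ?case
  proof (cases rule: emty.cases)
    case many_nil
    then show ?thesis using less.prems by simp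
  next
    case (many_cons G0 A0 b0 e0 m0 f0 D0 s0 b1 e1 m1 f1)
    show ?thesis
    proof (cases "s0 = s")
      case True
      then have "A0 = A" using many_cons less.prems by simp
      then show ?thesis using many_cons True by blast
    next
      case False
      then obtain A1 where A0: "A0 = A1 + {#s#}" and A: "A = A1 + {#s0#}"
        using many_cons less.prems by (metis add_mset_add_single add_eq_conv_ex)
      from less.hyps[of A0, OF _ \<open>emty G0 t A0 b0 e0 m0 f0\<close> A0] many_cons
      obtain G1 D b1' e1' m1' f1' b2 e2 m2 f2 where
        h: "emty G1 t A1 b1' e1' m1' f1'" "ety D t s b2 e2 m2 f2" "G0 = cplus G1 D"
        "b0 = b1' + b2" "e0 = e1' + e2" "m0 = m1' + m2" "f0 = f1' + f2" by auto
      have "emty (cplus G1 D0) t A (b1' + b1) (e1' + e1) (m1' + m1) (f1' + f1)"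
        using many_cons'[OF h(1) \<open>ety D0 t s0 b1 e1 m1 f1\<close>] A by simp
      moreover have "G = cplus (cplus G1 D0) D"
        using many_cons h by (auto simp: cplus_def fun_eq_iff add_ac)
      ultimately show ?thesis using many_cons h by (intro exI conjI) (assumption | simp)+
    qed
  qed
qed

lemma emty_plusE:
  assumes "emty G t (A1 + A2) b e m f"
  obtains G1 G2 b1 e1 m1 f1 b2 e2 m2 f2 where "emty G1 t A1 b1 e1 m1 f1" "emty G2 t A2 b2 e2 m2 f2"
    "G = cplus G1 G2" "b = b1 + b2" "e = e1 + e2" "m = m1 + m2" "f = f1 + f2"
  using assms
proof (induction A2 arbitrary: G b e m f thesis rule: multiset_induct)
  case empty
  then show ?case using many_nil by fastforce
next
  case (add x A2)
  from emty_add_mset_splitD[OF add.prems(2), of "A1 + A2" x]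
  obtain G1 D b1 e1 m1 f1 b2 e2 m2 f2 where
    h: "emty G1 t (A1 + A2) b1 e1 m1 f1" "ety D t x b2 e2 m2 f2" "G = cplus G1 D"
    "b = b1 + b2" "e = e1 + e2" "m = m1 + m2" "f = f1 + f2" by auto
  obtain H1 H2 c1 d1 n1 g1 c2 d2 n2 g2 where
    i: "emty H1 t A1 c1 d1 n1 g1" "emty H2 t A2 c2 d2 n2 g2" "G1 = cplus H1 H2"
    "b1 = c1 + c2" "e1 = d1 + d2" "m1 = n1 + n2" "f1 = g1 + g2"
    using add.IH[OF _ h(1)] by blast
  have "emty (cplus H2 D) t (add_mset x A2) (c2 + b2) (d2 + e2) (n2 + m2) (g2 + f2)"
    using many_cons'[OF i(2) h(2)] by simp
  then show ?case using add.prems(1)[OF i(1)] h i by (simp add: cplus_assoc add.assoc)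
qed

lemma emty_singleton_iff: "emty G t {#s#} b e m f \<longleftrightarrow> ety G t s b e m f"
  using emty_add_mset_splitD[of G t "{#s#}" b e m f "{#}" s] emty_emptyD many_cons'[OF many_nil]
  by fastforce

lemma ety_Sub_PPE:
  assumes "ety G (Sub t (PP p1 p2) u) \<sigma> b e m f"
  obtains (pat_x) G1 D A1 A2 bt et mt ft e1 m1 f1 e2 m2 f2 bu eu mu fu where
      "ety G1 t \<sigma> bt et mt ft" "ptyp (crestr G1 (nv p1)) p1 A1 e1 m1 f1"
      "ptyp (map G1 [nv p1..<nv p1 + nv p2]) p2 A2 e2 m2 f2" "ety D u (Prod A1 A2) bu eu mu fu"
      "G = cplus (cdrop G1 (nv p1 + nv p2)) D" "b = bt + bu" "e = et + eu + e1 + e2"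
      "m = Suc (mt + mu + m1 + m2)" "f = ft + fu + f1 + f2"
  | (pat_p) G1 D bt et mt ft bu eu mu fu where
      "ety G1 t \<sigma> bt et mt ft" "\<forall>A\<in>set (crestr G1 (nv p1 + nv p2)). tight_m A"
      "ety D u TN bu eu mu fu" "G = cplus (cdrop G1 (nv p1 + nv p2)) D"
      "b = bt + bu" "e = et + eu" "m = mt + mu" "f = Suc (ft + fu)"
proof -
  from assms obtain G1 D A bt et mt ft ep mp fp bu eu mu fu where
    h: "ety G1 t \<sigma> bt et mt ft" "ptyp (crestr G1 (nv (PP p1 p2))) (PP p1 p2) A ep mp fp"
    "emty D u A bu eu mu fu" "G = cplus (cdrop G1 (nv (PP p1 p2))) D"
    "b = bt + bu" "e = et + eu + ep" "m = mt + mu + mp" "f = ft + fu + fp"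
    by (rule ety_SubE)
  from h(2) show ?thesis
  proof (cases rule: ptyp_PPE)
    case (pat_x P1 P2 A1 A2 e1 m1 f1 e2 m2 f2)
    have "P1 @ P2 = crestr G1 (nv p1) @ map G1 [nv p1..<nv p1 + nv p2]"
      using pat_x(3) upt_add_eq_append[of 0 "nv p1" "nv p2"] by (simp add: crestr_def)
    moreover have "length P1 = length (crestr G1 (nv p1))"
      using ptyp_length[OF pat_x(1)] by (simp add: crestr_def)
    ultimately have "P1 = crestr G1 (nv p1)" "P2 = map G1 [nv p1..<nv p1 + nv p2]"
      by simp_all
    moreover have "ety D u (Prod A1 A2) bu eu mu fu"
      using h(3) pat_x(4) by (simp add: emty_singleton_iff)
    ultimately show ?thesis
      using that(1)[OF h(1)] pat_x h(4-8) by (simp add: add.assoc)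
  next
    case pat_p
    then show ?thesis
      using that(2)[OF h(1)] h(3-8) by (simp add: emty_singleton_iff)
  qed
qed

lemma ety_plug_Lam_type:
  "ety G (plug L (Lam p s)) \<tau> b e m f \<Longrightarrow> \<tau> \<noteq> TN \<and> (\<forall>A B. \<tau> \<noteq> Prod A B)"
proof (induction L arbitrary: G \<tau> b e m f rule: rev_induct)
  case Nil
  then show ?case by (auto elim: ety_LamE)
next
  case (snoc x L)
  then show ?case by (cases x) (auto elim!: ety_SubE dest: snoc.IH)
qed

lemma ety_plug_Pair_type:
  "ety G (plug L (Pair a c)) \<tau> b e m f \<Longrightarrow> \<tau> \<noteq> TN \<and> (\<forall>A s. \<tau> \<noteq> Arr A s)"
proof (induction L arbitrary: G \<tau> b e m f rule: rev_induct)
  case Nil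
  then show ?case by (auto elim: ety_PairE)
next
  case (snoc x L)
  then show ?case by (cases x) (auto elim!: ety_SubE dest: snoc.IH)
qed

lemma is_abs_type: "is_abs t \<Longrightarrow> ety G t \<tau> b e m f \<Longrightarrow> \<tau> \<noteq> TN \<and> (\<forall>A B. \<tau> \<noteq> Prod A B)"
  unfolding is_abs_def using ety_plug_Lam_type by blast

lemma is_pair_type: "is_pair t \<Longrightarrow> ety G t \<tau> b e m f \<Longrightarrow> \<tau> \<noteq> TN \<and> (\<forall>A s. \<tau> \<noteq> Arr A s)"
  unfolding is_pair_def using ety_plug_Pair_type by blast

section \<open>Weakening and substitution\<close>

lemma lift_0 [simp]: "lift 0 c t = t"
  by (induction t arbitrary: c) auto

lemma lift_lift: "lift k c (lift k' c t) = lift (k + k') c t"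
  by (induction t arbitrary: c) auto

lemma ety_lift:
  shows "ety G t s b e m f \<Longrightarrow> ety (cins k c G) (lift k c t) s b e m f"
    and "emty G t A b e m f \<Longrightarrow> emty (cins k c G) (lift k c t) A b e m f"
proof (induction arbitrary: c and c rule: ety_emty.inducts)
  case (ax x s)
  then show ?case by (auto intro!: ax' simp: cins_csing)
next
  case (abs G t s b e m f p A ep mp fp)
  show ?case
    by (simp, rule abs'[OF abs.IH[of "c + nv p"]])
      (use abs.hyps in \<open>simp_all add: crestr_cins cdrop_cins\<close>)
next
  case (abs_p G t s b e m f p)
  show ?case
    by (simp, rule abs_p'[OF abs_p.IH[of "c + nv p"] \<open>tight s\<close>])
      (use abs_p.hyps in \<open>simp_all add: crestr_cins cdrop_cins\<close>)
next
  case (many_nil t)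
  show ?case by (simp add: ety_emty.many_nil)
next
  case (many_cons G t A b e m f D s b' e' m' f')
  show ?case by (rule many_cons'[OF many_cons.IH]) (simp_all add: cins_cplus)
next
  case (app G t A s bt et mt ft D u bu eu mu fu)
  show ?case by (simp, rule app'[OF app.IH]) (simp_all add: cins_cplus)
next
  case (app_p G t b e m f u)
  show ?case by (simp, rule app_p'[OF app_p.IH]) simp_all
next
  case (pair G t A bt et mt ft D u B bu eu mu fu)
  show ?case by (simp, rule pair'[OF pair.IH]) (simp_all add: cins_cplus)
next
  case (pair_p t u)
  show ?case by (simp add: pair_p')
next
  case (match G t s bt et mt ft p A ep mp fp D u bu eu mu fu)
  show ?case
    by (simp, rule match'[OF match.IH(1)[of "c + nv p"] _ match.IH(2)])
      (use match.hyps in \<open>simp_all add: crestr_cins cdrop_cins cins_cplus\<close>)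
qed

lemma ety_subst:
  shows "ety G t s b e m f \<Longrightarrow> emty D u (G j) bu eu mu fu \<Longrightarrow>
           ety (csub j G D) (subst t j u) s (b + bu) (e + eu) (m + mu) (f + fu)"
    and "emty G t B b e m f \<Longrightarrow> emty D u (G j) bu eu mu fu \<Longrightarrow>
           emty (csub j G D) (subst t j u) B (b + bu) (e + eu) (m + mu) (f + fu)"
proof (induction arbitrary: j D bu eu mu fu and j D bu eu mu fu rule: ety_emty.inducts)
  case (ax x s)
  show ?case
  proof (cases "x = j")
    case True
    then have "ety D u s bu eu mu fu"
      using ax by (simp add: csing_def emty_singleton_iff)
    from ety_lift(1)[OF this, of j 0] show ?thesis
      using True by (simp add: csub_csing_same)
  next
    case False
    then have "D = cempty \<and> bu = 0 \<and> eu = 0 \<and> mu = 0 \<and> fu = 0"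
      using ax by (auto simp: csing_def dest: emty_emptyD)
    then show ?thesis using False by (auto intro!: ax' simp: csub_csing_other)
  qed
next
  case (abs G t s b e m f p A ep mp fp)
  have "emty D u (G (j + nv p)) bu eu mu fu"
    using abs.prems by (simp add: cdrop_def add.commute)
  from abs.IH[OF this] show ?case
    by (simp, rule abs') (use abs.hyps in \<open>simp_all add: crestr_csub cdrop_csub\<close>)
next
  case (abs_p G t s b e m f p)
  have "emty D u (G (j + nv p)) bu eu mu fu"
    using abs_p.prems by (simp add: cdrop_def add.commute)
  from abs_p.IH[OF this] show ?case
    by (simp, rule abs_p') (use abs_p.hyps in \<open>simp_all add: crestr_csub cdrop_csub\<close>)
next
  case (many_nil t)
  then have "D = cempty \<and> bu = 0 \<and> eu = 0 \<and> mu = 0 \<and> fu = 0"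
    by (auto simp: cempty_def dest: emty_emptyD)
  then show ?case by (simp add: ety_emty.many_nil)
next
  case (many_cons G t A b e m f D' s b' e' m' f')
  from many_cons.prems obtain D1 D2 b1 e1 m1 f1 b2 e2 m2 f2 where
    split: "emty D1 u (G j) b1 e1 m1 f1" "emty D2 u (D' j) b2 e2 m2 f2" "D = cplus D1 D2"
      "bu = b1 + b2" "eu = e1 + e2" "mu = m1 + m2" "fu = f1 + f2"
    by (auto simp: cplus_def elim: emty_plusE)
  show ?case
    by (rule many_cons'[OF many_cons.IH(1)[OF split(1)] many_cons.IH(2)[OF split(2)]])
      (simp_all add: split csub_cplus)
next
  case (app G t A s bt et mt ft D' u' bu' eu' mu' fu')
  from app.prems obtain D1 D2 b1 e1 m1 f1 b2 e2 m2 f2 where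
    split: "emty D1 u (G j) b1 e1 m1 f1" "emty D2 u (D' j) b2 e2 m2 f2" "D = cplus D1 D2"
      "bu = b1 + b2" "eu = e1 + e2" "mu = m1 + m2" "fu = f1 + f2"
    by (auto simp: cplus_def elim: emty_plusE)
  show ?case
    by (simp, rule app'[OF app.IH(1)[OF split(1)] app.IH(2)[OF split(2)]])
      (simp_all add: split csub_cplus)
next
  case (app_p G t b e m f u')
  show ?case by (simp, rule app_p'[OF app_p.IH[OF app_p.prems]]) simp_all
next
  case (pair G t A bt et mt ft D' u' B bu' eu' mu' fu')
  from pair.prems obtain D1 D2 b1 e1 m1 f1 b2 e2 m2 f2 where
    split: "emty D1 u (G j) b1 e1 m1 f1" "emty D2 u (D' j) b2 e2 m2 f2" "D = cplus D1 D2"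
      "bu = b1 + b2" "eu = e1 + e2" "mu = m1 + m2" "fu = f1 + f2"
    by (auto simp: cplus_def elim: emty_plusE)
  show ?case
    by (simp, rule pair'[OF pair.IH(1)[OF split(1)] pair.IH(2)[OF split(2)]])
      (simp_all add: split csub_cplus)
next
  case (pair_p t u')
  then have "D = cempty \<and> bu = 0 \<and> eu = 0 \<and> mu = 0 \<and> fu = 0"
    by (auto simp: cempty_def dest: emty_emptyD)
  then show ?case by (simp add: pair_p')
next
  case (match G t s bt et mt ft p A ep mp fp D' u' bu' eu' mu' fu')
  from match.prems obtain D1 D2 b1 e1 m1 f1 b2 e2 m2 f2 where
    split: "emty D1 u (G (j + nv p)) b1 e1 m1 f1" "emty D2 u (D' j) b2 e2 m2 f2" "D = cplus D1 D2"
      "bu = b1 + b2" "eu = e1 + e2" "mu = m1 + m2" "fu = f1 + f2"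
    by (auto simp: cplus_def cdrop_def add.commute elim: emty_plusE)
  show ?case
    by (simp, rule match'[OF match.IH(1)[OF split(1)] _ match.IH(2)[OF split(2)]])
      (use match.hyps in \<open>simp_all add: split csub_cplus crestr_csub cdrop_csub\<close>)
qed

section \<open>Quantitative subject reduction\<close>

lemma ety_beta_plug:
  "ety G (plug L (Lam p s)) (Arr A \<sigma>) b e m f \<Longrightarrow> emty D u A bu eu mu fu \<Longrightarrow>
   \<exists>b'. b = Suc b' \<and>
     ety (cplus G D) (plug L (Sub s p (lift (bvn L) 0 u))) \<sigma> (b' + bu) (e + eu) (m + mu) (f + fu)"
proof (induction L arbitrary: G b e m f D u rule: rev_induct)
  case Nil
  from Nil.prems(1) have "ety G (Lam p s) (Arr A \<sigma>) b e m f" by simp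
  then show ?case
  proof (cases rule: ety_LamE)
    case (abs G1 \<sigma>' b1 e1 m1 f1 A' ep mp fp)
    have "ety (cplus G D) (Sub s p u) \<sigma> (b1 + bu) (e + eu) (m + mu) (f + fu)"
      using abs by (intro match'[OF _ _ Nil.prems(2)]) auto
    then show ?thesis using abs by simp
  next
    case abs_p
    then show ?thesis by simp
  qed
next
  case (snoc x L)
  obtain q v where x: "x = (q, v)" by fastforce
  from snoc.prems(1) obtain G1 G2 B b1 e1 m1 f1 e2 m2 f2 b3 e3 m3 f3 where
    h: "ety G1 (plug L (Lam p s)) (Arr A \<sigma>) b1 e1 m1 f1" "ptyp (crestr G1 (nv q)) q B e2 m2 f2"
      "emty G2 v B b3 e3 m3 f3" "G = cplus (cdrop G1 (nv q)) G2" "b = b1 + b3" "e = e1 + e3 + e2"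
      "m = m1 + m3 + m2" "f = f1 + f3 + f2"
    by (auto simp: x elim: ety_SubE)
  from snoc.IH[OF h(1) ety_lift(2)[OF snoc.prems(2), of "nv q" 0]] obtain b' where
    b': "b1 = Suc b'" and
    ty: "ety (cplus G1 (cins (nv q) 0 D)) (plug L (Sub s p (lift (bvn L) 0 (lift (nv q) 0 u)))) \<sigma>
           (b' + bu) (e1 + eu) (m1 + mu) (f1 + fu)"
    by blast
  have "crestr (cplus G1 (cins (nv q) 0 D)) (nv q) = crestr G1 (nv q)"
    by (auto simp: crestr_def cplus_def cins_def)
  with h(2) have "ptyp (crestr (cplus G1 (cins (nv q) 0 D)) (nv q)) q B e2 m2 f2"
    by simp
  from match'[OF ty this h(3)]
  have "ety (cplus G D) (Sub (plug L (Sub s p (lift (bvn L) 0 (lift (nv q) 0 u)))) q v) \<sigma>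
     (b' + bu + b3) (e1 + eu + e3 + e2) (m1 + mu + m3 + m2) (f1 + fu + f3 + f2)"
    by (auto simp: h(4) fun_eq_iff cplus_def cdrop_def cins_def add_ac)
  then show ?case using h b' by (simp add: x lift_lift add_ac)
qed

lemma map_upt_add_shift: "map G [n..<n + k] = map (\<lambda>x. G (x + n)) [0..<k]"
  by (induction k) (auto simp: add.commute)

lemma ety_match_Pair:
  assumes "ety Gu (Pair u1 u2) (Prod A1 A2) bu eu mu fu" and "ety Gt t \<sigma> bt et mt ft"
    and "ptyp (crestr Gt (nv p1)) p1 A1 e1 m1 f1"
    and "ptyp (map Gt [nv p1..<nv p1 + nv p2]) p2 A2 e2 m2 f2"
  shows "ety (cplus (cdrop Gt (nv p1 + nv p2)) Gu) (Sub (Sub t p1 (lift (nv p2) 0 u1)) p2 u2) \<sigma>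
     (bt + bu) (et + eu + e1 + e2) (mt + mu + m1 + m2) (ft + fu + f1 + f2)"
  using assms(1)
proof (cases rule: ety_PairE)
  case (pair D1 D2 A B b1 e1' m1' f1' b2 e2' m2' f2')
  have inner: "ety (cplus (cdrop Gt (nv p1)) (cins (nv p2) 0 D1)) (Sub t p1 (lift (nv p2) 0 u1)) \<sigma>
      (bt + b1) (et + e1' + e1) (mt + m1' + m1) (ft + f1' + f1)"
    by (rule match'[OF assms(2,3) ety_lift(2)]) (use pair in simp_all)
  have "crestr (cplus (cdrop Gt (nv p1)) (cins (nv p2) 0 D1)) (nv p2) =
      map Gt [nv p1..<nv p1 + nv p2]"
    by (auto simp: crestr_def cplus_def cdrop_def cins_def map_upt_add_shift)
  with assms(4) pair
  have "ety (cplus (cdrop (cplus (cdrop Gt (nv p1)) (cins (nv p2) 0 D1)) (nv p2)) D2)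
      (Sub (Sub t p1 (lift (nv p2) 0 u1)) p2 u2) \<sigma> (bt + b1 + b2) (et + e1' + e1 + e2' + e2)
      (mt + m1' + m1 + m2' + m2) (ft + f1' + f1 + f2' + f2)"
    by (intro match'[OF inner]) simp_all
  moreover have "cplus (cdrop (cplus (cdrop Gt (nv p1)) (cins (nv p2) 0 D1)) (nv p2)) D2 =
      cplus (cdrop Gt (nv p1 + nv p2)) Gu"
    using pair by (auto simp: fun_eq_iff cplus_def cdrop_def cins_def add_ac)
  ultimately show ?thesis using pair by (simp add: add_ac)
next
  case pair_p
  then show ?thesis by simp
qed

lemma ety_match_plug_Pair:
  "ety Gu (plug L (Pair u1 u2)) (Prod A1 A2) bu eu mu fu \<Longrightarrow> ety Gt t \<sigma> bt et mt ft \<Longrightarrow>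
   ptyp (crestr Gt (nv p1)) p1 A1 e1 m1 f1 \<Longrightarrow>
   ptyp (map Gt [nv p1..<nv p1 + nv p2]) p2 A2 e2 m2 f2 \<Longrightarrow>
   ety (cplus (cdrop Gt (nv p1 + nv p2)) Gu)
     (plug L (Sub (Sub (lift (bvn L) (nv p1 + nv p2) t) p1 (lift (nv p2) 0 u1)) p2 u2)) \<sigma>
     (bt + bu) (et + eu + e1 + e2) (mt + mu + m1 + m2) (ft + fu + f1 + f2)"
proof (induction L arbitrary: Gu bu eu mu fu Gt t bt et mt ft rule: rev_induct)
  case Nil
  then show ?case using ety_match_Pair by simp
next
  case (snoc x L)
  obtain q v where x: "x = (q, v)" by fastforce
  let ?n = "nv p1 + nv p2"
  from snoc.prems(1) obtain G1 G2 B b1 e1' m1' f1' ep mp fp b3 e3 m3 f3 where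
    h: "ety G1 (plug L (Pair u1 u2)) (Prod A1 A2) b1 e1' m1' f1'" "ptyp (crestr G1 (nv q)) q B ep mp fp"
      "emty G2 v B b3 e3 m3 f3" "Gu = cplus (cdrop G1 (nv q)) G2" "bu = b1 + b3" "eu = e1' + e3 + ep"
      "mu = m1' + m3 + mp" "fu = f1' + f3 + fp"
    by (auto simp: x elim: ety_SubE)
  have restr1: "crestr (cins (nv q) ?n Gt) (nv p1) = crestr Gt (nv p1)"
    by (rule crestr_cins) simp
  have restr2: "map (cins (nv q) ?n Gt) [nv p1..<?n] = map Gt [nv p1..<?n]"
    by (auto simp: cins_def)
  have ty: "ety (cplus (cdrop (cins (nv q) ?n Gt) ?n) G1)
     (plug L (Sub (Sub (lift (bvn L) ?n (lift (nv q) ?n t)) p1 (lift (nv p2) 0 u1)) p2 u2)) \<sigma>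
     (bt + b1) (et + e1' + e1 + e2) (mt + m1' + m1 + m2) (ft + f1' + f1 + f2)"
    using snoc.IH[OF h(1) ety_lift(1)[OF snoc.prems(2), of "nv q" ?n]] snoc.prems(3,4)
    by (simp only: restr1 restr2)
  have "crestr (cplus (cdrop (cins (nv q) ?n Gt) ?n) G1) (nv q) = crestr G1 (nv q)"
    by (auto simp: crestr_def cplus_def cins_def cdrop_def)
  with h(2) have "ptyp (crestr (cplus (cdrop (cins (nv q) ?n Gt) ?n) G1) (nv q)) q B ep mp fp"
    by simp
  from match'[OF ty this h(3)]
  have "ety (cplus (cdrop Gt ?n) Gu)
     (Sub (plug L (Sub (Sub (lift (bvn L) ?n (lift (nv q) ?n t)) p1 (lift (nv p2) 0 u1)) p2 u2))
       q v) \<sigma>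
     (bt + b1 + b3) (et + e1' + e1 + e2 + e3 + ep) (mt + m1' + m1 + m2 + m3 + mp)
     (ft + f1' + f1 + f2 + f3 + fp)"
    by (auto simp: h(4) fun_eq_iff cplus_def cdrop_def cins_def add_ac)
  then show ?case using h by (simp add: x lift_lift add_ac)
qed

definition count_step :: "kind \<Rightarrow> nat \<Rightarrow> nat \<Rightarrow> nat \<Rightarrow> nat \<Rightarrow> nat \<Rightarrow> nat \<Rightarrow> bool" where
  "count_step k b e m b' e' m' \<longleftrightarrow> (case k of
      KB \<Rightarrow> b = Suc b' \<and> e = e' \<and> m = m'
    | KE \<Rightarrow> b = b' \<and> e = Suc e' \<and> m = m'
    | KM \<Rightarrow> b = b' \<and> e = e' \<and> m = Suc m')"

lemma count_step_add:
  "count_step k b e m b' e' m' \<Longrightarrow> count_step k (b + x) (e + y) (m + z) (b' + x) (e' + y) (m' + z)"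
  by (cases k) (auto simp: count_step_def)

lemma count_step_less: "count_step k b e m b' e' m' \<Longrightarrow> b' + e' + m' < b + e + m"
  by (cases k) (auto simp: count_step_def)

lemma hreds_step:
  "hred t k t' \<Longrightarrow> hreds t' b' e' m' u \<Longrightarrow> count_step k b e m b' e' m' \<Longrightarrow> hreds t b e m u"
  by (cases k) (auto simp: count_step_def intro: hr_b hr_e hr_m)

definition typing_decreases :: "kind \<Rightarrow> trm \<Rightarrow> trm \<Rightarrow> bool" where
  "typing_decreases k t t' \<longleftrightarrow> (\<forall>G \<sigma> b e m f. ety G t \<sigma> b e m f \<longrightarrow>
     (\<exists>b' e' m'. ety G t' \<sigma> b' e' m' f \<and> count_step k b e m b' e' m'))"

lemma typing_decreasesI:
  assumes "\<And>G \<sigma> b e m f. ety G t \<sigma> b e m f \<Longrightarrow>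
    \<exists>b' e' m'. ety G t' \<sigma> b' e' m' f \<and> count_step k b e m b' e' m'"
  shows "typing_decreases k t t'"
  using assms by (auto simp: typing_decreases_def)

lemma typing_decreasesD:
  assumes "typing_decreases k t t'" and "ety G t \<sigma> b e m f"
  obtains b' e' m' where "ety G t' \<sigma> b' e' m' f" "count_step k b e m b' e' m'"
  using assms unfolding typing_decreases_def by blast

lemma typing_decreases_beta:
  "typing_decreases KB (App (plug L (Lam p s)) u) (plug L (Sub s p (lift (bvn L) 0 u)))"
proof (rule typing_decreasesI)
  fix G \<sigma> b e m f
  assume "ety G (App (plug L (Lam p s)) u) \<sigma> b e m f"
  then show "\<exists>b' e' m'. ety G (plug L (Sub s p (lift (bvn L) 0 u))) \<sigma> b' e' m' f \<and>
      count_step KB b e m b' e' m'"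
  proof (cases rule: ety_AppE)
    case (app G1 D A bt et mt ft bu eu mu fu)
    then show ?thesis by (auto simp: count_step_def dest: ety_beta_plug)
  next
    case app_p
    then show ?thesis using ety_plug_Lam_type by blast
  qed
qed

lemma typing_decreases_subst: "typing_decreases KE (Sub t PV u) (subst t 0 u)"
proof (rule typing_decreasesI)
  fix G \<sigma> b e m f
  assume "ety G (Sub t PV u) \<sigma> b e m f"
  then obtain G1 D A bt et mt ft ep mp fp bu eu mu fu where
    h: "ety G1 t \<sigma> bt et mt ft" "ptyp (crestr G1 (nv PV)) PV A ep mp fp" "emty D u A bu eu mu fu"
    "G = cplus (cdrop G1 (nv PV)) D" "b = bt + bu" "e = et + eu + ep" "m = mt + mu + mp"
    "f = ft + fu + fp"
    by (rule ety_SubE)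
  from h(2) have "A = G1 0" "ep = 1" "mp = 0" "fp = 0"
    by (auto simp: crestr_def dest: ptyp_PVE)
  moreover have "csub 0 G1 D = G"
    using h(4) by (auto simp: csub_def cplus_def cdrop_def fun_eq_iff)
  ultimately show "\<exists>b' e' m'. ety G (subst t 0 u) \<sigma> b' e' m' f \<and> count_step KE b e m b' e' m'"
    using ety_subst(1)[OF h(1), of D u 0] h by (auto simp: count_step_def)
qed

lemma typing_decreases_match_pair:
  "typing_decreases KM (Sub t (PP p1 p2) (plug L (Pair u1 u2)))
     (plug L (Sub (Sub (lift (bvn L) (nv p1 + nv p2) t) p1 (lift (nv p2) 0 u1)) p2 u2))"
proof (rule typing_decreasesI)
  fix G \<sigma> b e m f
  assume "ety G (Sub t (PP p1 p2) (plug L (Pair u1 u2))) \<sigma> b e m f"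
  then show "\<exists>b' e' m'. ety G (plug L (Sub (Sub (lift (bvn L) (nv p1 + nv p2) t) p1
      (lift (nv p2) 0 u1)) p2 u2)) \<sigma> b' e' m' f \<and> count_step KM b e m b' e' m'"
  proof (cases rule: ety_Sub_PPE)
    case (pat_x G1 D A1 A2 bt et mt ft e1 m1 f1 e2 m2 f2 bu eu mu fu)
    then have "ety G (plug L (Sub (Sub (lift (bvn L) (nv p1 + nv p2) t) p1
        (lift (nv p2) 0 u1)) p2 u2)) \<sigma> (bt + bu) (et + eu + e1 + e2) (mt + mu + m1 + m2) f"
      using ety_match_plug_Pair by simp
    moreover have "count_step KM b e m (bt + bu) (et + eu + e1 + e2) (mt + mu + m1 + m2)"
      using pat_x by (simp add: count_step_def)
    ultimately show ?thesis by blast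
  next
    case pat_p
    then show ?thesis using ety_plug_Pair_type by blast
  qed
qed

lemma typing_decreases_Lam:
  assumes "typing_decreases k t t'"
  shows "typing_decreases k (Lam p t) (Lam p t')"
proof (rule typing_decreasesI)
  fix G \<sigma> b e m f
  assume "ety G (Lam p t) \<sigma> b e m f"
  then show "\<exists>b' e' m'. ety G (Lam p t') \<sigma> b' e' m' f \<and> count_step k b e m b' e' m'"
  proof (cases rule: ety_LamE)
    case (abs G1 \<sigma>' b1 e1 m1 f1 A ep mp fp)
    obtain b' e' m' where t': "ety G1 t' \<sigma>' b' e' m' f1" and c: "count_step k b1 e1 m1 b' e' m'"
      using typing_decreasesD[OF assms abs(1)] .
    have "ety G (Lam p t') \<sigma> (b' + 1) (e' + ep) (m' + mp) f"
      using ety_emty.abs[OF t' abs(2)] abs(3,4,8) by simp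
    moreover have "count_step k b e m (b' + 1) (e' + ep) (m' + mp)"
      using count_step_add[OF c, of 1 ep mp] abs(5-7) by simp
    ultimately show ?thesis by blast
  next
    case (abs_p G1 \<sigma>' f1)
    obtain b' e' m' where t': "ety G1 t' \<sigma>' b' e' m' f1" and "count_step k b e m b' e' m'"
      using typing_decreasesD[OF assms abs_p(1)] .
    moreover have "ety G (Lam p t') \<sigma> b' e' m' f"
      using ety_emty.abs_p[OF t' abs_p(2,3)] abs_p(4-6) by simp
    ultimately show ?thesis by blast
  qed
qed


lemma typing_decreases_App:
  assumes "typing_decreases k t t'"
  shows "typing_decreases k (App t u) (App t' u)"
proof (rule typing_decreasesI)
  fix G \<sigma> b e m f
  assume "ety G (App t u) \<sigma> b e m f"
  then show "\<exists>b' e' m'. ety G (App t' u) \<sigma> b' e' m' f \<and> count_step k b e m b' e' m'"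
  proof (cases rule: ety_AppE)
    case (app G1 D A bt et mt ft bu eu mu fu)
    obtain b' e' m' where t': "ety G1 t' (Arr A \<sigma>) b' e' m' ft" and c: "count_step k bt et mt b' e' m'"
      using typing_decreasesD[OF assms app(1)] .
    have "ety G (App t' u) \<sigma> (b' + bu) (e' + eu) (m' + mu) f"
      using ety_emty.app[OF t' app(2)] app(3,7) by simp
    moreover have "count_step k b e m (b' + bu) (e' + eu) (m' + mu)"
      using count_step_add[OF c, of bu eu mu] app(4-6) by simp
    ultimately show ?thesis by blast
  next
    case (app_p f1)
    obtain b' e' m' where t': "ety G t' TN b' e' m' f1" and "count_step k b e m b' e' m'"
      using typing_decreasesD[OF assms app_p(1)] .
    moreover have "ety G (App t' u) \<sigma> b' e' m' f"
      using ety_emty.app_p[OF t'] app_p(2,3) by simp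
    ultimately show ?thesis by blast
  qed
qed

lemma typing_decreases_Sub_left:
  assumes "typing_decreases k t t'"
  shows "typing_decreases k (Sub t p u) (Sub t' p u)"
proof (rule typing_decreasesI)
  fix G \<sigma> b e m f
  assume "ety G (Sub t p u) \<sigma> b e m f"
  then obtain G1 D A bt et mt ft ep mp fp bu eu mu fu where
    h: "ety G1 t \<sigma> bt et mt ft" "ptyp (crestr G1 (nv p)) p A ep mp fp" "emty D u A bu eu mu fu"
    "G = cplus (cdrop G1 (nv p)) D" "b = bt + bu" "e = et + eu + ep" "m = mt + mu + mp"
    "f = ft + fu + fp"
    by (rule ety_SubE)
  obtain b' e' m' where t': "ety G1 t' \<sigma> b' e' m' ft" and c: "count_step k bt et mt b' e' m'"
    using typing_decreasesD[OF assms h(1)] .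
  have "ety G (Sub t' p u) \<sigma> (b' + bu) (e' + eu + ep) (m' + mu + mp) f"
    using ety_emty.match[OF t' h(2,3)] h(4,8) by simp
  moreover have "count_step k b e m (b' + bu) (e' + eu + ep) (m' + mu + mp)"
    using count_step_add[OF c, of bu "eu + ep" "mu + mp"] h(5-7) by (simp add: add.assoc)
  ultimately show "\<exists>b' e' m'. ety G (Sub t' p u) \<sigma> b' e' m' f \<and> count_step k b e m b' e' m'"
    by blast
qed

lemma typing_decreases_Sub_right:
  assumes "typing_decreases k u u'"
  shows "typing_decreases k (Sub t (PP p1 p2) u) (Sub t (PP p1 p2) u')"
proof (rule typing_decreasesI)
  fix G \<sigma> b e m f
  assume "ety G (Sub t (PP p1 p2) u) \<sigma> b e m f"
  then obtain G1 D A bt et mt ft ep mp fp bu eu mu fu where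
    h: "ety G1 t \<sigma> bt et mt ft" "ptyp (crestr G1 (nv (PP p1 p2))) (PP p1 p2) A ep mp fp"
    "emty D u A bu eu mu fu" "G = cplus (cdrop G1 (nv (PP p1 p2))) D" "b = bt + bu"
    "e = et + eu + ep" "m = mt + mu + mp" "f = ft + fu + fp"
    by (rule ety_SubE)
  from h(2) obtain \<tau> where A: "A = {#\<tau>#}"
    by (cases rule: ptyp_PPE) auto
  obtain b' e' m' where u': "ety D u' \<tau> b' e' m' fu" and c: "count_step k bu eu mu b' e' m'"
    using typing_decreasesD[OF assms h(3)[unfolded A emty_singleton_iff]] .
  have "ety G (Sub t (PP p1 p2) u') \<sigma> (bt + b') (et + e' + ep) (mt + m' + mp) f"
    using ety_emty.match[OF h(1,2)] u' A h(4,8) by (simp add: emty_singleton_iff)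
  moreover have "count_step k b e m (bt + b') (et + e' + ep) (mt + m' + mp)"
    using count_step_add[OF c, of bt "et + ep" "mt + mp"] h(5-7) by (simp add: add_ac)
  ultimately show "\<exists>b' e' m'. ety G (Sub t (PP p1 p2) u') \<sigma> b' e' m' f \<and> count_step k b e m b' e' m'"
    by blast
qed

lemma hsteps_typing_decreases: "(k, t') \<in> hsteps t \<Longrightarrow> typing_decreases k t t'"
proof (induction t arbitrary: k t')
  case (Lam p t)
  then show ?case by (auto intro: typing_decreases_Lam)
next
  case (App t u)
  from App.prems show ?case
  proof (cases rule: hsteps_AppE)
    case beta
    then show ?thesis by (simp add: typing_decreases_beta)
  next
    case left
    then show ?thesis by (simp add: typing_decreases_App App.IH)
  qed
next
  case (Sub t p u)
  from Sub.prems show ?case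
  proof (cases rule: hsteps_SubE)
    case left
    then show ?thesis by (simp add: typing_decreases_Sub_left Sub.IH)
  next
    case subst
    then show ?thesis by (simp add: typing_decreases_subst)
  next
    case pair
    then show ?thesis by (simp add: typing_decreases_match_pair)
  next
    case right
    then show ?thesis by (simp add: typing_decreases_Sub_right Sub.IH)
  qed
qed simp_all

section \<open>Tight typings of head normal forms\<close>

lemma tight_typing_normal_form:
  assumes "hsteps t = {}" and "ety G t \<sigma> b e m f" and "tight_ctx G"
  shows "(\<not> is_abs t \<and> \<not> is_pair t \<longrightarrow> tight \<sigma> \<and> canN t)
    \<and> (tight \<sigma> \<longrightarrow> canM t \<and> b = 0 \<and> e = 0 \<and> m = 0 \<and> f = csize t)"
  using assms
proof (induction t arbitrary: G \<sigma> b e m f)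
  case (Var x)
  then have "G = csing x {#\<sigma>#} \<and> b = 0 \<and> e = 0 \<and> m = 0 \<and> f = 0"
    by (simp add: ety_VarE)
  moreover have "tight_m (G x)"
    using Var.prems(3) by (simp add: tight_ctx_def)
  ultimately show ?case by (simp add: csing_def tight_m_def cN_var cM_N)
next
  case (Lam p t)
  from Lam.prems(2) show ?case
  proof (cases rule: ety_LamE)
    case abs
    then show ?thesis by (simp add: tight_def)
  next
    case (abs_p G1 \<sigma>' f1)
    then have "tight_ctx G1"
      using tight_ctx_if_cdrop_crestr Lam.prems(3) by blast
    then show ?thesis
      using Lam.IH[OF _ abs_p(1)] Lam.prems(1) abs_p by (simp add: cM_lam)
  qed
next
  case (Pair a c)
  from Pair.prems(2) show ?case
  proof (cases rule: ety_PairE)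
    case pair
    then show ?thesis by (simp add: tight_def)
  next
    case pair_p
    then show ?thesis by (simp add: cM_pair)
  qed
next
  case (App t u)
  from App.prems(1) have t_normal: "hsteps t = {}" "\<not> is_abs t"
    unfolding hsteps_App_eq_empty by simp_all
  from App.prems(2) show ?case
  proof (cases rule: ety_AppE)
    case (app G1 D A bt et mt ft bu eu mu fu)
    then have "\<not> is_pair t" using is_pair_type by blast
    then have "tight (Arr A \<sigma>)"
      using App.IH(1)[OF t_normal(1) app(1)] App.prems(3) app(3) t_normal(2) by simp
    then show ?thesis by (simp add: tight_def)
  next
    case (app_p f1)
    then have "\<not> is_pair t" using is_pair_type by blast
    then show ?thesis
      using App.IH(1)[OF t_normal(1) app_p(1) App.prems(3)] t_normal(2) app_p
      by (simp add: tight_def cN_app cM_N)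
  qed
next
  case (Sub t p u)
  from Sub.prems(1) obtain p1 p2 where
    normal: "hsteps t = {}" "p = PP p1 p2" "\<not> is_pair u" "hsteps u = {}"
    unfolding hsteps_Sub_eq_empty by blast
  from Sub.prems(2) normal(2) have "ety G (Sub t (PP p1 p2) u) \<sigma> b e m f" by simp
  then show ?case
  proof (cases rule: ety_Sub_PPE)
    case (pat_x G1 D A1 A2 bt et mt ft e1 m1 f1 e2 m2 f2 bu eu mu fu)
    then have "\<not> is_abs u" using is_abs_type by blast
    then have "tight (Prod A1 A2)"
      using Sub.IH(2)[OF normal(4) pat_x(4)] Sub.prems(3) pat_x(5) normal(3) by simp
    then show ?thesis by (simp add: tight_def)
  next
    case (pat_p G1 D bt et mt ft bu eu mu fu)
    then have "\<not> is_abs u" using is_abs_type by blast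
    then have u_normal: "canN u" "bu = 0" "eu = 0" "mu = 0" "fu = csize u"
      using Sub.IH(2)[OF normal(4) pat_p(3)] Sub.prems(3) pat_p(4) normal(3)
      by (simp_all add: tight_def)
    have "tight_ctx G1"
      using tight_ctx_if_cdrop_crestr[of G1 "nv p1 + nv p2"] Sub.prems(3) pat_p(2,4) by simp
    then show ?thesis
      using Sub.IH(1)[OF normal(1) pat_p(1)] u_normal pat_p(5-8) normal(2)
      by (simp add: cN_sub cM_sub)
  qed
qed

theorem theorem2:
  assumes "ety G t s b e m f"
    and "tight_ctx G"
    and "tight s"
  shows "\<exists>u. canM u \<and> hreds t b e m u \<and> csize u = f"
  using assms
proof (induction "b + e + m" arbitrary: t b e m rule: less_induct)
  case less
  show ?case
  proof (cases "hsteps t = {}")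
    case True
    with tight_typing_normal_form[OF True less.prems(1,2)] less.prems(3) show ?thesis
      by (auto intro: hr_refl)
  next
    case False
    then obtain k t' where step: "(k, t') \<in> hsteps t" by auto
    then obtain b' e' m' where t': "ety G t' s b' e' m' f" and c: "count_step k b e m b' e' m'"
      using typing_decreasesD[OF hsteps_typing_decreases less.prems(1)] by blast
    obtain u where "canM u" "hreds t' b' e' m' u" "csize u = f"
      using less.hyps[OF count_step_less[OF c] t' less.prems(2,3)] by blast
    moreover have "hred t k t'"
      using step by (simp add: hred_def)
    ultimately show ?thesis
      using hreds_step c by blast
  qed
qed

end
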